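(* Under the hypotheses of the previous lemma (standing assumptions, SLC and BUC, each $B_k$ nonnegative doubly stochastic scrambling with nonzero entries at least a fixed $\kappa>0$), and assuming the step sizes satisfy $\alpha_k>0$, $\alpha_{k+1}\le\alpha_k$, $\sum_k\alpha_k=\infty$ and $\sum_k\alpha_k^2<\infty$, one has $$\sum_{k=0}^\infty\alpha_k\max_J\|\delta^J_k\|<\infty,$$ where $\delta^J_k=x^J_{0,k}-\frac1S\sum_{I=1}^S x^I_{0,k}$.
   Context: Standing setup. Integers $S\ge1$ (servers), $C\ge1$ (clients), $D\ge1$, $\Delta\ge1$. $\mathcal{X}\subseteq\mathbb{R}^D$ is a nonempty convex compact set and $\mathcal{P}_{\mathcal{X}}$ is Euclidean projection onto $\mathcal{X}$. For $h=1,\dots,C$, $f_h:\mathbb{R}^D\to\mathbb{R}$ is continuously differentiable and convex with gradient $g_h$; there are constants $L_h$ with $\|g_h(x)\|\le L_h$ for all $x\in\mathcal{X}$ and constants $N_h>0$ with $\|g_h(x)-g_h(y)\|\le N_h\|x-y\|$ for all $x,y\in\mathcal{X}$. Norms are Euclidean. Weight matrices $W_{i,k}\in\mathbb{R}^{S\times C}$ ($0\le i\le\Delta-1$, $k\ge0$), entries possibly negative. Symmetric Learning Condition (SLC): there is $M>0$ with $\sum_{i=1}^{\Delta}\sum_{J=1}^S W_{i-1,k}[J,h]=M$ for all $k\ge0$ and all $h$. Bounded Update Condition (BUC): there is $\bar M>0$ with $\sum_{i=1}^{\Delta}\sum_{J=1}^S |W_{i-1,k}[J,h]|\le\bar M$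 for all $k,h$. Consensus matrices $B_k\in\mathbb{R}^{S\times S}$ have nonnegative entries. Iteration: given $x^J_{0,0}\in\mathcal{X}$ ($J=1,\dots,S$), for each $k\ge0$ and $i=1,\dots,\Delta$, $x^J_{i,k}=\mathcal{P}_{\mathcal{X}}\big[x^J_{i-1,k}-\alpha_k\sum_{h=1}^C W_{i-1,k}[J,h]\,g_h(x^J_{i-1,k})\big]$, and then $x^I_{0,k+1}=\sum_{J=1}^S B_k[I,J]\,x^J_{\Delta,k}$. A square matrix $B$ is scrambling if for every two rows $I,G$ there is a column $J$ with $B[I,J]>0$ and $B[G,J]>0$. *)

theory Defs
  imports "HOL-Analysis.Analysis"
begin

text \<open>Square matrices over index set {1..n} represented as functions nat => nat => real.\<close>

definition scrambling :: "nat \<Rightarrow> (nat \<Rightarrow> nat \<Rightarrow> real) \<Rightarrow> bool" where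
  "scrambling n B \<longleftrightarrow>
     (\<forall>I\<in>{1..n}. \<forall>G\<in>{1..n}. \<exists>J\<in>{1..n}. B I J > 0 \<and> B G J > 0)"

definition doubly_stochastic :: "nat \<Rightarrow> (nat \<Rightarrow> nat \<Rightarrow> real) \<Rightarrow> bool" where
  "doubly_stochastic n B \<longleftrightarrow>
     (\<forall>I\<in>{1..n}. \<forall>J\<in>{1..n}. B I J \<ge> 0) \<and>
     (\<forall>I\<in>{1..n}. (\<Sum>J=1..n. B I J) = 1) \<and>
     (\<forall>J\<in>{1..n}. (\<Sum>I=1..n. B I J) = 1)"

text \<open>Disagreement of server J at the start of round k.\<close>
definition delta :: "nat \<Rightarrow> (nat \<Rightarrow> nat \<Rightarrow> nat \<Rightarrow> 'a::real_vector) \<Rightarrow> nat \<Rightarrow> nat \<Rightarrow> 'a" where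
  "delta S x J k = x J 0 k - (1 / real S) *\<^sub>R (\<Sum>I=1..S. x I 0 k)"

end

theory Submission
  imports Defs
begin

text \<open>
  Let \<open>d k\<close> be the diameter of the round-start points \<open>x J 0 k\<close> of the servers; it
  dominates every \<open>norm (delta S x J k)\<close>. Within a round each server moves by at most
  \<open>\<alpha> k * G\<close> with \<open>G = Mbar * (\<Sum>h=1..C. L h)\<close>, because projection onto \<open>X\<close> is nonexpansive and
  BUC bounds the weights. Averaging with a doubly stochastic scrambling matrix whose nonzero
  entries are at least \<open>\<kappa>\<close> contracts the diameter by the factor \<open>1 - \<kappa>\<close>, since any two of
  its rows share mass at least \<open>\<kappa>\<close>. Hence \<open>d (k+1) \<le> (1 - \<kappa>) * (d k + 2 * G * \<alpha> k)\<close>, and as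
  \<open>\<alpha>\<close> is nonincreasing, \<open>\<alpha> k * d k\<close> obeys a contractive recurrence forced by the summable
  sequence \<open>(\<alpha> k)\<^sup>2\<close>, so it is summable.
\<close>

lemma summable_of_contractive_recurrence:
  fixes a b :: "nat \<Rightarrow> real"
  assumes a_nonneg: "\<And>k. 0 \<le> a k"
    and recurrence: "\<And>k. a (Suc k) \<le> \<rho> * a k + b k"
    and "summable b" and b_nonneg: "\<And>k. 0 \<le> b k"
    and "0 \<le> \<rho>" and "\<rho> < 1"
  shows "summable a"
proof (rule summableI_nonneg_bounded[where x = "(a 0 + suminf b) / (1 - \<rho>)"])
  show "0 \<le> a n" for n by (rule a_nonneg)
  have partial_b: "sum b {..<m} \<le> suminf b" for m
    using sum_le_suminf[OF \<open>summable b\<close>] b_nonneg by auto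
  fix n
  have "(1 - \<rho>) * sum a {..<n} \<le> a 0 + suminf b"
  proof (cases n)
    case 0
    then show ?thesis using a_nonneg[of 0] suminf_nonneg[OF \<open>summable b\<close> b_nonneg] by simp
  next
    case (Suc m)
    have "sum a {..<Suc m} = a 0 + (\<Sum>k<m. a (Suc k))" by (rule sum.lessThan_Suc_shift)
    also have "\<dots> \<le> a 0 + (\<Sum>k<m. \<rho> * a k + b k)"
      using recurrence by (intro add_left_mono sum_mono) auto
    also have "\<dots> = a 0 + \<rho> * sum a {..<m} + sum b {..<m}"
      by (simp add: sum.distrib sum_distrib_left)
    also have "\<dots> \<le> a 0 + \<rho> * sum a {..<Suc m} + suminf b"
      using partial_b[of m] mult_nonneg_nonneg[OF \<open>0 \<le> \<rho>\<close> a_nonneg[of m]] by (simp add: distrib_left)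
    finally show ?thesis using Suc by (simp add: algebra_simps)
  qed
  then show "sum a {..<n} \<le> (a 0 + suminf b) / (1 - \<rho>)"
    using \<open>\<rho> < 1\<close> by (simp add: field_simps)
qed

lemma summable_step_times_contracted_sequence:
  fixes d \<alpha> :: "nat \<Rightarrow> real"
  assumes d_nonneg: "\<And>k. 0 \<le> d k"
    and recurrence: "\<And>k. d (Suc k) \<le> \<rho> * (d k + c * \<alpha> k)"
    and \<alpha>_pos: "\<And>k. 0 < \<alpha> k" and \<alpha>_decreasing: "\<And>k. \<alpha> (Suc k) \<le> \<alpha> k"
    and \<alpha>_square_summable: "summable (\<lambda>k. (\<alpha> k)\<^sup>2)"
    and "0 \<le> \<rho>" "\<rho> < 1" "0 \<le> c"
  shows "summable (\<lambda>k. \<alpha> k * d k)"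
proof (rule summable_of_contractive_recurrence[where \<rho> = \<rho> and b = "\<lambda>k. \<rho> * c * (\<alpha> k)\<^sup>2"])
  show "0 \<le> \<alpha> k * d k" for k using \<alpha>_pos[of k] d_nonneg[of k] by simp
  show "summable (\<lambda>k. \<rho> * c * (\<alpha> k)\<^sup>2)" using \<alpha>_square_summable by (rule summable_mult)
  show "0 \<le> \<rho> * c * (\<alpha> k)\<^sup>2" for k using \<open>0 \<le> \<rho>\<close> \<open>0 \<le> c\<close> by simp
  fix k
  have "\<alpha> (Suc k) * d (Suc k) \<le> \<alpha> k * d (Suc k)"
    using \<alpha>_decreasing[of k] d_nonneg by (simp add: mult_right_mono)
  also have "\<dots> \<le> \<alpha> k * (\<rho> * (d k + c * \<alpha> k))"
    using recurrence[of k] \<alpha>_pos[of k] by (simp add: mult_left_mono)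
  also have "\<dots> = \<rho> * (\<alpha> k * d k) + \<rho> * c * (\<alpha> k)\<^sup>2"
    by (simp add: algebra_simps power2_eq_square)
  finally show "\<alpha> (Suc k) * d (Suc k) \<le> \<rho> * (\<alpha> k * d k) + \<rho> * c * (\<alpha> k)\<^sup>2" .
qed (use assms in auto)

lemma norm_diff_weighted_sums_le:
  fixes y :: "nat \<Rightarrow> 'a::real_normed_vector"
  assumes "finite A"
    and a_nonneg: "\<And>J. J \<in> A \<Longrightarrow> 0 \<le> a J" and b_nonneg: "\<And>J. J \<in> A \<Longrightarrow> 0 \<le> b J"
    and same_mass: "sum b A = sum a A"
    and diam: "\<And>J K. J \<in> A \<Longrightarrow> K \<in> A \<Longrightarrow> norm (y J - y K) \<le> D"
  shows "norm ((\<Sum>J\<in>A. a J *\<^sub>R y J) - (\<Sum>J\<in>A. b J *\<^sub>R y J)) \<le> sum a A * D"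
proof (cases "sum a A = 0")
  case True
  then have "\<forall>J\<in>A. a J = 0" "\<forall>J\<in>A. b J = 0"
    using same_mass a_nonneg b_nonneg \<open>finite A\<close> by (simp_all add: sum_nonneg_eq_0_iff)
  then show ?thesis using True by simp
next
  case False
  define t where "t = sum a A"
  have t_pos: "0 < t"
    using False sum_nonneg[of A a] a_nonneg unfolding t_def by fastforce
  have pairing: "t *\<^sub>R ((\<Sum>J\<in>A. a J *\<^sub>R y J) - (\<Sum>J\<in>A. b J *\<^sub>R y J))
      = (\<Sum>J\<in>A. \<Sum>K\<in>A. (a J * b K) *\<^sub>R (y J - y K))"
  proof -
    have "(\<Sum>J\<in>A. \<Sum>K\<in>A. (a J * b K) *\<^sub>R y K) = (\<Sum>K\<in>A. \<Sum>J\<in>A. (a J * b K) *\<^sub>R y K)"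
      by (rule sum.swap)
    then show ?thesis
      by (simp add: scaleR_diff_right sum_subtractf scaleR_sum_right scaleR_sum_left[symmetric]
          sum_distrib_left[symmetric] sum_distrib_right[symmetric] same_mass t_def mult.commute)
  qed
  have "t * norm ((\<Sum>J\<in>A. a J *\<^sub>R y J) - (\<Sum>J\<in>A. b J *\<^sub>R y J))
      = norm (\<Sum>J\<in>A. \<Sum>K\<in>A. (a J * b K) *\<^sub>R (y J - y K))"
    using t_pos by (simp add: pairing[symmetric])
  also have "\<dots> \<le> (\<Sum>J\<in>A. \<Sum>K\<in>A. norm ((a J * b K) *\<^sub>R (y J - y K)))"
    by (rule order_trans[OF norm_sum sum_mono[OF norm_sum]])
  also have "\<dots> \<le> (\<Sum>J\<in>A. \<Sum>K\<in>A. (a J * b K) * D)"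
    using a_nonneg b_nonneg diam by (intro sum_mono) (simp add: mult_left_mono)
  also have "\<dots> = t * (t * D)"
    by (simp add: sum_distrib_right[symmetric] sum_distrib_left[symmetric] same_mass t_def)
  finally show ?thesis using t_pos unfolding t_def by simp
qed

text \<open>For \<open>n = 0\<close> the maximum below is over the empty set, so the lemmas assume \<open>n \<ge> 1\<close>.\<close>

definition spread :: "nat \<Rightarrow> (nat \<Rightarrow> 'a::real_normed_vector) \<Rightarrow> real" where
  "spread n y = Max ((\<lambda>(I, G). norm (y I - y G)) ` ({1..n} \<times> {1..n}))"

lemma spread_ge:
  assumes "I \<in> {1..n}" "G \<in> {1..n}"
  shows "norm (y I - y G) \<le> spread n y"
  unfolding spread_def using assms by (intro Max_ge) auto

lemma spread_leI:
  assumes "n \<ge> 1" and "\<And>I G. I \<in> {1..n} \<Longrightarrow> G \<in> {1..n} \<Longrightarrow> norm (y I - y G) \<le> D"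
  shows "spread n y \<le> D"
  unfolding spread_def using assms by (subst Max_le_iff) auto

lemma spread_cong: "(\<And>J. J \<in> {1..n} \<Longrightarrow> y J = z J) \<Longrightarrow> spread n y = spread n z"
  unfolding spread_def by (intro arg_cong[where f = Max] image_cong) auto

lemma spread_nonneg: "n \<ge> 1 \<Longrightarrow> 0 \<le> spread n y"
  using spread_ge[of 1 n 1 y] by simp

lemma spread_perturbation_le:
  assumes "n \<ge> 1" and close: "\<And>J. J \<in> {1..n} \<Longrightarrow> norm (y J - z J) \<le> e"
  shows "spread n y \<le> spread n z + 2 * e"
proof (rule spread_leI[OF \<open>n \<ge> 1\<close>])
  fix I G assume I: "I \<in> {1..n}" and G: "G \<in> {1..n}"
  have "norm (y I - y G) \<le> norm (y I - z I) + norm (z I - z G) + norm (z G - y G)"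
    using norm_triangle_ineq[of "y I - z I" "z I - z G"] norm_triangle_ineq[of "y I - z G" "z G - y G"]
    by simp
  also have "\<dots> \<le> e + spread n z + e"
    using close[OF I] close[OF G] spread_ge[OF I G, of z] by (simp add: norm_minus_commute)
  finally show "norm (y I - y G) \<le> spread n z + 2 * e" by simp
qed

lemma norm_deviation_from_mean_le_spread:
  fixes y :: "nat \<Rightarrow> 'a::real_normed_vector"
  assumes "n \<ge> 1" "J \<in> {1..n}"
  shows "norm (y J - (1 / real n) *\<^sub>R (\<Sum>I=1..n. y I)) \<le> spread n y"
proof -
  have n_pos: "0 < real n" using assms by simp
  have "y J - (1 / real n) *\<^sub>R (\<Sum>I=1..n. y I) = (1 / real n) *\<^sub>R (\<Sum>I=1..n. y J - y I)"
    using n_pos by (simp add: sum_subtractf scaleR_diff_right sum_constant_scaleR)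
  then have "norm (y J - (1 / real n) *\<^sub>R (\<Sum>I=1..n. y I)) \<le> (1 / real n) * (\<Sum>I=1..n. norm (y J - y I))"
    using n_pos by (simp add: norm_sum divide_right_mono)
  also have "\<dots> \<le> (1 / real n) * (\<Sum>I=1..n. spread n y)"
    using assms spread_ge by (intro mult_left_mono sum_mono) auto
  also have "\<dots> = spread n y" using n_pos by simp
  finally show ?thesis .
qed

lemma scrambling_weight_le_one:
  assumes "n \<ge> 1" "doubly_stochastic n B" "scrambling n B"
    and \<kappa>_bound: "\<And>I J. I \<in> {1..n} \<Longrightarrow> J \<in> {1..n} \<Longrightarrow> B I J \<noteq> 0 \<Longrightarrow> B I J \<ge> \<kappa>"
  shows "\<kappa> \<le> 1"
proof -
  have one: "1 \<in> {1..n}" using \<open>n \<ge> 1\<close> by simp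
  obtain J where J: "J \<in> {1..n}" "B 1 J > 0"
    using \<open>scrambling n B\<close> one unfolding scrambling_def by blast
  have "B 1 J \<le> (\<Sum>K=1..n. B 1 K)"
    using J \<open>doubly_stochastic n B\<close> one unfolding doubly_stochastic_def by (intro member_le_sum) auto
  also have "\<dots> = 1" using \<open>doubly_stochastic n B\<close> one unfolding doubly_stochastic_def by auto
  finally show ?thesis using \<kappa>_bound[OF one J(1)] J(2) by simp
qed

lemma scrambling_rows_diff_le:
  fixes y :: "nat \<Rightarrow> 'a::real_normed_vector"
  assumes "doubly_stochastic n B" "scrambling n B"
    and \<kappa>_bound: "\<And>I J. I \<in> {1..n} \<Longrightarrow> J \<in> {1..n} \<Longrightarrow> B I J \<noteq> 0 \<Longrightarrow> B I J \<ge> \<kappa>"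
    and I: "I \<in> {1..n}" and G: "G \<in> {1..n}"
  shows "norm ((\<Sum>J=1..n. B I J *\<^sub>R y J) - (\<Sum>J=1..n. B G J *\<^sub>R y J)) \<le> (1 - \<kappa>) * spread n y"
proof -
  define m where "m J = min (B I J) (B G J)" for J
  have B_nonneg: "0 \<le> B I J" "0 \<le> B G J" if "J \<in> {1..n}" for J
    using assms(1) I G that unfolding doubly_stochastic_def by auto
  have row_sums: "(\<Sum>J=1..n. B I J) = 1" "(\<Sum>J=1..n. B G J) = 1"
    using assms(1) I G unfolding doubly_stochastic_def by auto
  \<comment> \<open>the common part m of the two rows cancels; what is left has mass 1 - \<Sum> m \<le> 1 - \<kappa>\<close>
  obtain J0 where J0: "J0 \<in> {1..n}" "B I J0 > 0" "B G J0 > 0"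
    using \<open>scrambling n B\<close> I G unfolding scrambling_def by blast
  have "\<kappa> \<le> m J0" using \<kappa>_bound[OF I J0(1)] \<kappa>_bound[OF G J0(1)] J0 unfolding m_def by auto
  also have "\<dots> \<le> (\<Sum>J=1..n. m J)" using J0(1) B_nonneg by (intro member_le_sum) (auto simp: m_def)
  finally have leftover_mass: "(\<Sum>J=1..n. B I J - m J) \<le> 1 - \<kappa>"
    using row_sums by (simp add: sum_subtractf)
  have "(\<Sum>J=1..n. B I J *\<^sub>R y J) - (\<Sum>J=1..n. B G J *\<^sub>R y J)
      = (\<Sum>J=1..n. (B I J - m J) *\<^sub>R y J) - (\<Sum>J=1..n. (B G J - m J) *\<^sub>R y J)"
    by (simp add: scaleR_diff_left sum_subtractf)
  also have "norm \<dots> \<le> (\<Sum>J=1..n. B I J - m J) * spread n y"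
    using row_sums by (intro norm_diff_weighted_sums_le) (auto simp: m_def sum_subtractf intro: spread_ge)
  also have "\<dots> \<le> (1 - \<kappa>) * spread n y"
    using leftover_mass spread_ge[OF I I, of y] by (intro mult_right_mono) auto
  finally show ?thesis .
qed

lemma spread_consensus_le:
  fixes y :: "nat \<Rightarrow> 'a::real_normed_vector"
  assumes "n \<ge> 1" "doubly_stochastic n B" "scrambling n B"
    and "\<And>I J. I \<in> {1..n} \<Longrightarrow> J \<in> {1..n} \<Longrightarrow> B I J \<noteq> 0 \<Longrightarrow> B I J \<ge> \<kappa>"
  shows "spread n (\<lambda>I. \<Sum>J=1..n. B I J *\<^sub>R y J) \<le> (1 - \<kappa>) * spread n y"
  using assms by (intro spread_leI scrambling_rows_diff_le) auto

lemma doubly_stochastic_row_combination_in_convex: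
  assumes "convex X" "doubly_stochastic n B" "I \<in> {1..n}" "\<And>J. J \<in> {1..n} \<Longrightarrow> y J \<in> X"
  shows "(\<Sum>J=1..n. B I J *\<^sub>R y J) \<in> X"
  using assms unfolding doubly_stochastic_def by (intro convex_sum) auto

lemma projected_path_drift_le:
  fixes z v :: "nat \<Rightarrow> 'a::euclidean_space"
  assumes "convex X" "closed X" "X \<noteq> {}" "z 0 \<in> X"
    and projection: "\<And>i. i \<in> {1..n} \<Longrightarrow> z i = closest_point X (z (i - 1) - v i)"
    and step_bound: "\<And>i. i \<in> {1..n} \<Longrightarrow> z (i - 1) \<in> X \<Longrightarrow> norm (v i) \<le> c i"
  shows "norm (z n - z 0) \<le> (\<Sum>i=1..n. c i)"
  using projection step_bound
proof (induction n)
  case 0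
  then show ?case by simp
next
  case (Suc n)
  have "z n \<in> X"
    using Suc.prems(1)[of n] \<open>z 0 \<in> X\<close> closest_point_in_set[OF \<open>closed X\<close> \<open>X \<noteq> {}\<close>]
    by (cases n) auto
  then have "norm (z (Suc n) - z n)
      = dist (closest_point X (z n - v (Suc n))) (closest_point X (z n))"
    using Suc.prems(1)[of "Suc n"] by (simp add: closest_point_self dist_norm)
  also have "\<dots> \<le> norm (v (Suc n))"
    using closest_point_lipschitz[OF \<open>convex X\<close> \<open>closed X\<close> \<open>X \<noteq> {}\<close>, of "z n - v (Suc n)" "z n"]
    by (simp add: dist_norm)
  finally have "norm (z (Suc n) - z n) \<le> c (Suc n)" using Suc.prems(2)[of "Suc n"] \<open>z n \<in> X\<close> by simp
  moreover have "norm (z n - z 0) \<le> (\<Sum>i=1..n. c i)" using Suc by simp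
  ultimately show ?case
    using norm_triangle_ineq[of "z (Suc n) - z n" "z n - z 0"] by simp
qed

lemma sum_abs_weights_times_bounds_le:
  fixes W :: "nat \<Rightarrow> nat \<Rightarrow> nat \<Rightarrow> real"
  assumes bounded_update: "\<And>h. h \<in> {1..C} \<Longrightarrow> (\<Sum>i=1..\<Delta>. \<Sum>J=1..S. \<bar>W (i - 1) J h\<bar>) \<le> Mbar"
    and L_nonneg: "\<And>h. h \<in> {1..C} \<Longrightarrow> 0 \<le> L h" and "J \<in> {1..S}"
  shows "(\<Sum>i=1..\<Delta>. \<Sum>h=1..C. \<bar>W (i - 1) J h\<bar> * L h) \<le> Mbar * (\<Sum>h=1..C. L h)"
proof -
  have "(\<Sum>i=1..\<Delta>. \<Sum>h=1..C. \<bar>W (i - 1) J h\<bar> * L h) = (\<Sum>h=1..C. L h * (\<Sum>i=1..\<Delta>. \<bar>W (i - 1) J h\<bar>))"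
    by (subst sum.swap) (simp add: sum_distrib_left mult.commute)
  also have "\<dots> \<le> (\<Sum>h=1..C. L h * Mbar)"
  proof (intro sum_mono mult_left_mono)
    fix h assume h: "h \<in> {1..C}"
    have "(\<Sum>i=1..\<Delta>. \<bar>W (i - 1) J h\<bar>) \<le> (\<Sum>i=1..\<Delta>. \<Sum>J'=1..S. \<bar>W (i - 1) J' h\<bar>)"
      using \<open>J \<in> {1..S}\<close> by (intro sum_mono member_le_sum) auto
    then show "(\<Sum>i=1..\<Delta>. \<bar>W (i - 1) J h\<bar>) \<le> Mbar" using bounded_update[OF h] by linarith
  qed (use L_nonneg in auto)
  finally show ?thesis by (simp add: sum_distrib_left mult.commute)
qed

lemma Max_norm_delta_le_spread:
  assumes "S \<ge> 1"
  shows "(MAX J\<in>{1..S}. norm (delta S x J k)) \<le> spread S (\<lambda>J. x J 0 k)"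
  using assms norm_deviation_from_mean_le_spread[of S _ "\<lambda>J. x J 0 k"]
  by (subst Max_le_iff) (auto simp: delta_def)

locale projected_consensus_iteration =
  fixes S C \<Delta> :: nat
    and X :: "'a::euclidean_space set"
    and g :: "nat \<Rightarrow> 'a \<Rightarrow> 'a" and L :: "nat \<Rightarrow> real"
    and W :: "nat \<Rightarrow> nat \<Rightarrow> nat \<Rightarrow> nat \<Rightarrow> real"
    and B :: "nat \<Rightarrow> nat \<Rightarrow> nat \<Rightarrow> real"
    and Mbar \<kappa> :: real
    and \<alpha> :: "nat \<Rightarrow> real"
    and x :: "nat \<Rightarrow> nat \<Rightarrow> nat \<Rightarrow> 'a"
  assumes S_pos: "S \<ge> 1" and Delta_pos: "\<Delta> \<ge> 1"
    and X_ne: "X \<noteq> {}" and X_convex: "convex X" and X_closed: "closed X"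
    and g_bound: "\<And>h z. h \<in> {1..C} \<Longrightarrow> z \<in> X \<Longrightarrow> norm (g h z) \<le> L h"
    and bounded_update: "\<And>k h. h \<in> {1..C} \<Longrightarrow>
          (\<Sum>i=1..\<Delta>. \<Sum>J=1..S. \<bar>W (i - 1) k J h\<bar>) \<le> Mbar"
    and B_ds: "\<And>k. doubly_stochastic S (B k)"
    and B_scr: "\<And>k. scrambling S (B k)"
    and B_kappa: "\<And>k I J. I \<in> {1..S} \<Longrightarrow> J \<in> {1..S} \<Longrightarrow> B k I J \<noteq> 0 \<Longrightarrow> B k I J \<ge> \<kappa>"
    and alpha_pos: "\<And>k. \<alpha> k > 0"
    and x_init: "\<And>J. J \<in> {1..S} \<Longrightarrow> x J 0 0 \<in> X"
    and x_step: "\<And>k i J. i \<in> {1..\<Delta>} \<Longrightarrow> J \<in> {1..S} \<Longrightarrow>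
        x J i k = closest_point X
          (x J (i - 1) k - \<alpha> k *\<^sub>R (\<Sum>h=1..C. W (i - 1) k J h *\<^sub>R g h (x J (i - 1) k)))"
    and x_cons: "\<And>k I. I \<in> {1..S} \<Longrightarrow> x I 0 (Suc k) = (\<Sum>J=1..S. B k I J *\<^sub>R x J \<Delta> k)"
begin

lemma kappa_le_one: "\<kappa> \<le> 1"
  using scrambling_weight_le_one[OF S_pos B_ds B_scr B_kappa] .

lemma L_nonneg: "h \<in> {1..C} \<Longrightarrow> 0 \<le> L h"
  using X_ne g_bound norm_ge_zero order_trans by blast

lemma round_start_in_set: "J \<in> {1..S} \<Longrightarrow> x J 0 k \<in> X"
proof (cases k)
  case (Suc k')
  assume J: "J \<in> {1..S}"
  have "x I \<Delta> k' \<in> X" if "I \<in> {1..S}" for I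
    using x_step[OF _ that] Delta_pos closest_point_in_set[OF X_closed X_ne] by simp
  then show ?thesis
    using Suc x_cons[OF J] doubly_stochastic_row_combination_in_convex[OF X_convex B_ds J] by simp
qed (use x_init in simp)

lemma round_drift_le:
  assumes J: "J \<in> {1..S}"
  shows "norm (x J \<Delta> k - x J 0 k) \<le> \<alpha> k * (Mbar * (\<Sum>h=1..C. L h))"
proof -
  have "norm (x J \<Delta> k - x J 0 k) \<le> (\<Sum>i=1..\<Delta>. \<alpha> k * (\<Sum>h=1..C. \<bar>W (i - 1) k J h\<bar> * L h))"
  proof (rule projected_path_drift_le[where z = "\<lambda>i. x J i k",
        OF X_convex X_closed X_ne round_start_in_set[OF J]])
    fix i assume "i \<in> {1..\<Delta>}" and X: "x J (i - 1) k \<in> X"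
    show "norm (\<alpha> k *\<^sub>R (\<Sum>h=1..C. W (i - 1) k J h *\<^sub>R g h (x J (i - 1) k)))
        \<le> \<alpha> k * (\<Sum>h=1..C. \<bar>W (i - 1) k J h\<bar> * L h)"
      using alpha_pos[of k] g_bound[OF _ X]
      by (auto intro!: mult_left_mono order_trans[OF norm_sum] sum_mono simp: mult_left_mono)
  qed (use x_step J in simp)
  also have "\<dots> \<le> \<alpha> k * (Mbar * (\<Sum>h=1..C. L h))"
    using sum_abs_weights_times_bounds_le[OF bounded_update L_nonneg J] alpha_pos[of k]
    by (simp add: sum_distrib_left[symmetric])
  finally show ?thesis .
qed

lemma spread_recurrence:
  "spread S (\<lambda>J. x J 0 (Suc k))
     \<le> (1 - \<kappa>) * (spread S (\<lambda>J. x J 0 k) + 2 * (Mbar * (\<Sum>h=1..C. L h)) * \<alpha> k)"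
proof -
  have "spread S (\<lambda>J. x J 0 (Suc k)) = spread S (\<lambda>I. \<Sum>J=1..S. B k I J *\<^sub>R x J \<Delta> k)"
    using x_cons by (intro spread_cong) auto
  also have "\<dots> \<le> (1 - \<kappa>) * spread S (\<lambda>J. x J \<Delta> k)"
    by (rule spread_consensus_le[OF S_pos B_ds B_scr B_kappa])
  also have "spread S (\<lambda>J. x J \<Delta> k) \<le> spread S (\<lambda>J. x J 0 k) + 2 * (\<alpha> k * (Mbar * (\<Sum>h=1..C. L h)))"
    by (rule spread_perturbation_le[OF S_pos]) (rule round_drift_le)
  then have "(1 - \<kappa>) * spread S (\<lambda>J. x J \<Delta> k)
      \<le> (1 - \<kappa>) * (spread S (\<lambda>J. x J 0 k) + 2 * (Mbar * (\<Sum>h=1..C. L h)) * \<alpha> k)"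
    using kappa_le_one by (intro mult_left_mono) (auto simp: algebra_simps)
  finally show ?thesis .
qed

end

theorem mainTheorem4:
  fixes S C \<Delta> :: nat
    and X :: "'a::euclidean_space set"
    and f :: "nat \<Rightarrow> 'a \<Rightarrow> real" and g :: "nat \<Rightarrow> 'a \<Rightarrow> 'a"
    and L N :: "nat \<Rightarrow> real"
    and W :: "nat \<Rightarrow> nat \<Rightarrow> nat \<Rightarrow> nat \<Rightarrow> real"
    and B :: "nat \<Rightarrow> nat \<Rightarrow> nat \<Rightarrow> real"
    and M Mbar \<kappa> :: real
    and \<alpha> :: "nat \<Rightarrow> real"
    and x :: "nat \<Rightarrow> nat \<Rightarrow> nat \<Rightarrow> 'a"
  assumes S_pos: "S \<ge> 1" and C_pos: "C \<ge> 1" and Delta_pos: "\<Delta> \<ge> 1"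
    and X_ne: "X \<noteq> {}" and X_convex: "convex X" and X_compact: "compact X"
    and f_deriv: "\<And>h z. h \<in> {1..C} \<Longrightarrow> (f h has_derivative (\<lambda>v. g h z \<bullet> v)) (at z)"
    and g_cont: "\<And>h. h \<in> {1..C} \<Longrightarrow> continuous_on UNIV (g h)"
    and f_convex: "\<And>h. h \<in> {1..C} \<Longrightarrow> convex_on UNIV (f h)"
    and g_bound: "\<And>h z. h \<in> {1..C} \<Longrightarrow> z \<in> X \<Longrightarrow> norm (g h z) \<le> L h"
    and N_pos: "\<And>h. h \<in> {1..C} \<Longrightarrow> N h > 0"
    and g_lip: "\<And>h y z. h \<in> {1..C} \<Longrightarrow> y \<in> X \<Longrightarrow> z \<in> X \<Longrightarrow>
                  norm (g h y - g h z) \<le> N h * norm (y - z)"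
    and SLC: "M > 0" "\<And>k h. h \<in> {1..C} \<Longrightarrow>
                 (\<Sum>i=1..\<Delta>. \<Sum>J=1..S. W (i - 1) k J h) = M"
    and BUC: "Mbar > 0" "\<And>k h. h \<in> {1..C} \<Longrightarrow>
                 (\<Sum>i=1..\<Delta>. \<Sum>J=1..S. \<bar>W (i - 1) k J h\<bar>) \<le> Mbar"
    and B_ds: "\<And>k. doubly_stochastic S (B k)"
    and B_scr: "\<And>k. scrambling S (B k)"
    and kappa_pos: "\<kappa> > 0"
    and B_kappa: "\<And>k I J. I \<in> {1..S} \<Longrightarrow> J \<in> {1..S} \<Longrightarrow> B k I J \<noteq> 0 \<Longrightarrow> B k I J \<ge> \<kappa>"
    and alpha_pos: "\<And>k. \<alpha> k > 0"
    and alpha_mono: "\<And>k. \<alpha> (Suc k) \<le> \<alpha> k"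
    and alpha_div: "\<not> summable \<alpha>"
    and alpha_sq: "summable (\<lambda>k. (\<alpha> k)\<^sup>2)"
    and x_init: "\<And>J. J \<in> {1..S} \<Longrightarrow> x J 0 0 \<in> X"
    and x_step: "\<And>k i J. i \<in> {1..\<Delta>} \<Longrightarrow> J \<in> {1..S} \<Longrightarrow>
        x J i k = closest_point X
          (x J (i - 1) k - \<alpha> k *\<^sub>R (\<Sum>h=1..C. W (i - 1) k J h *\<^sub>R g h (x J (i - 1) k)))"
    and x_cons: "\<And>k I. I \<in> {1..S} \<Longrightarrow>
        x I 0 (Suc k) = (\<Sum>J=1..S. B k I J *\<^sub>R x J \<Delta> k)"
  shows "summable (\<lambda>k. \<alpha> k * (MAX J\<in>{1..S}. norm (delta S x J k)))"
proof -
  interpret projected_consensus_iteration S C \<Delta> X g L W B Mbar \<kappa> \<alpha> x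
    using assms by unfold_locales (simp_all add: compact_imp_closed)
  have "0 \<le> Mbar * (\<Sum>h=1..C. L h)"
    using BUC(1) L_nonneg by (intro mult_nonneg_nonneg sum_nonneg) auto
  then have "summable (\<lambda>k. \<alpha> k * spread S (\<lambda>J. x J 0 k))"
    using spread_nonneg[OF S_pos] kappa_le_one kappa_pos
    by (intro summable_step_times_contracted_sequence[where \<rho> = "1 - \<kappa>"
          and c = "2 * (Mbar * (\<Sum>h=1..C. L h))"] spread_recurrence alpha_pos alpha_mono alpha_sq) auto
  then show ?thesis
  proof (rule summable_comparison_test')
    fix k
    have "0 \<le> (MAX J\<in>{1..S}. norm (delta S x J k))"
      using S_pos by (subst Max_ge_iff) auto
    then show "norm (\<alpha> k * (MAX J\<in>{1..S}. norm (delta S x J k))) \<le> \<alpha> k * spread S (\<lambda>J. x J 0 k)"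
      using Max_norm_delta_le_spread[OF S_pos] alpha_pos[of k] by (simp add: abs_mult)
  qed
qed

end
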